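(* Let $1\le k\le d$, let $\gamma(t)=(t,t^2,\dots,t^d)$ be the moment curve in $\mathbb{R}^d$, and let $U_1,U_2$ be two $k$-element sets of points on $\gamma$. Write $W=U_1\cup U_2=\{w_1,\dots,w_m\}$ with $w_i=\gamma(t_i)$ and $t_1<\dots<t_m$. Call a subset $\{w_{i_1},\dots,w_{i_q}\}\subseteq W$ with $i_1<\dots<i_q$ contiguous if $i_q-i_1=q-1$. Suppose that for some $j\in\{1,2\}$ one can write $U_j=Y_S\cup X_1\cup\dots\cup X_t\cup Y_E$ ($t\ge0$) with all of $Y_S,X_1,\dots,X_t,Y_E$ contiguous, $Y_S=\emptyset$ or $w_1\in Y_S$, $Y_E=\emptyset$ or $w_m\in Y_E$, and at most $d-k$ of the sets $X_i$ of odd cardinality. Then $\operatorname{conv}U_1\cap\operatorname{conv}U_2=\operatorname{conv}(U_1\cap U_2)$. *)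

theory Defs
  imports "HOL-Analysis.Analysis"
begin

text \<open>Coordinates of \<open>real ^ 'n\<close> are indexed by a finite well-ordered type; the
  position of index \<open>i\<close> (0-based) is the number of indices below it. So with
  d = CARD('n) the coordinates are i_1 < ... < i_d and the moment curve is
  gamma(t) = (t, t^2, ..., t^d).\<close>

definition coord_pos :: "'n::{finite,wellorder} \<Rightarrow> nat" where
  "coord_pos i = card {j. j < i}"

definition moment_curve :: "real \<Rightarrow> real ^ 'n::{finite,wellorder}" where
  "moment_curve t = (\<chi> i. t ^ Suc (coord_pos i))"

text \<open>Points of W are given by their (distinct) parameters; W = {w_1,...,w_m} with
  t_1 < ... < t_m. The index of a parameter s in W is 1 + the number of elements of W below s.\<close>

definition idx_in :: "real set \<Rightarrow> real \<Rightarrow> nat" where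
  "idx_in W s = Suc (card {v \<in> W. v < s})"

definition contiguous_in :: "real set \<Rightarrow> real set \<Rightarrow> bool" where
  "contiguous_in W S \<longleftrightarrow> S \<subseteq> W \<and>
     (S \<noteq> {} \<longrightarrow> idx_in W (Max S) - idx_in W (Min S) = card S - 1)"

end

theory Submission
  imports Defs "HOL-Computational_Algebra.Polynomial"
begin

text \<open>Let \<open>x\<close> lie in both hulls and write it as a convex combination of
  \<open>\<gamma>(T\<^sub>1)\<close> and of \<open>\<gamma>(T\<^sub>2)\<close>. The difference \<open>f\<close> of the coefficient vectors is an affine
  dependence on \<open>\<gamma>(W)\<close>, \<open>W = T\<^sub>1 \<union> T\<^sub>2\<close>; since the coordinates of \<open>\<gamma>(t)\<close> are \<open>t, \<dots>, t\<^sup>d\<close>,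
  \<open>f\<close> is orthogonal to every polynomial of degree \<open>\<le> d\<close> on \<open>W\<close>. If \<open>T\<^sub>1\<close> is the decomposed set,
  \<open>f \<le> 0\<close> off \<open>T\<^sub>1\<close>, and a polynomial of degree \<open>\<le> d\<close> that is positive off \<open>T\<^sub>1\<close> and has the
  sign of \<open>-f\<close> on \<open>T\<^sub>1\<close> forces \<open>f = 0\<close> on \<open>T\<^sub>1\<close>, so \<open>x\<close> is a combination of the common points.\<close>

definition has_sign :: "bool \<Rightarrow> real \<Rightarrow> bool" where
  "has_sign pos v \<longleftrightarrow> (if pos then 0 < v else v < 0)"

lemma has_sign_mult: "has_sign s u \<Longrightarrow> has_sign t v \<Longrightarrow> has_sign (s = t) (u * v)"
  by (auto simp: has_sign_def mult_neg_neg mult_pos_neg mult_neg_pos)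

lemma has_sign_True [simp]: "has_sign True v \<longleftrightarrow> 0 < v"
  by (simp add: has_sign_def)

lemma has_sign_nonzero: "has_sign s v \<Longrightarrow> v \<noteq> 0"
  by (auto simp: has_sign_def split: if_splits)

text \<open>Multiplying by the linear factor \<open>m - y\<close> keeps the sign left of \<open>m\<close> and flips it right of \<open>m\<close>.\<close>

lemma has_sign_linear_factor:
  assumes "has_sign s (poly p y)" and "y \<noteq> m"
  shows "has_sign (s \<longleftrightarrow> y < m) (poly (p * [:m, -1:]) y)"
proof -
  have "has_sign (y < m) (m - y)" using assms(2) by (auto simp: has_sign_def)
  from has_sign_mult[OF assms(1) this] show ?thesis by (simp add: algebra_simps)
qed

definition sign_interpolant :: "real set \<Rightarrow> (real \<Rightarrow> bool) \<Rightarrow> real poly \<Rightarrow> bool" where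
  "sign_interpolant A \<sigma> p \<longleftrightarrow> degree p \<le> card A - 1
     \<and> (even (degree p) \<longleftrightarrow> \<sigma> (Min A) = \<sigma> (Max A))
     \<and> (\<forall>x\<in>A. has_sign (\<sigma> x) (poly p x))
     \<and> (\<forall>y\<le>Min A. has_sign (\<sigma> (Min A)) (poly p y))
     \<and> (\<forall>y\<ge>Max A. has_sign (\<sigma> (Max A)) (poly p y))"

text \<open>Adding a point \<open>b\<close> to the right: keep \<open>p\<close> if the sign at \<open>b\<close> equals the right tail sign,
  otherwise flip the right tail by a linear factor vanishing between \<open>Max A\<close> and \<open>b\<close>.\<close>

lemma sign_interpolant_insert_max:
  assumes fin: "finite A" "A \<noteq> {}" and b: "Max A < b" and p: "sign_interpolant A \<sigma> p"
  shows "\<exists>q. sign_interpolant (insert b A) \<sigma> q"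
proof -
  have Max_A: "Max A \<in> A" "Min A \<le> Max A" using fin by auto
  have Min_ins: "Min (insert b A) = Min A" using fin Max_A b by (simp add: min_absorb2)
  have Max_ins: "Max (insert b A) = b" using fin b by (simp add: max_absorb1)
  have card_ins: "card (insert b A) = card A + 1" "card A \<ge> 1"
    using fin b Max_A by (auto simp: Suc_leI card_gt_0_iff)
  show ?thesis
  proof (cases "\<sigma> b = \<sigma> (Max A)")
    case True
    thus ?thesis using p b card_ins Max_A
      by (intro exI[of _ p]) (auto simp: sign_interpolant_def Min_ins Max_ins)
  next
    case flip: False
    define m where "m = (Max A + b) / 2"
    have m: "Max A < m" "m < b" using b by (auto simp: m_def)
    define q where "q = p * [:m, -1:]"
    have "p \<noteq> 0" using p Max_A has_sign_nonzero by (fastforce simp: sign_interpolant_def)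
    hence "degree q = degree p + 1" unfolding q_def by (subst degree_mult_eq) auto
    moreover have left: "has_sign s (poly q y)" if "has_sign s (poly p y)" "y < m" for s y
      using has_sign_linear_factor[OF that(1), of m] that(2) by (simp add: q_def)
    moreover have right: "has_sign (\<sigma> b) (poly q y)" if "Max A \<le> y" "m < y" for y
      using has_sign_linear_factor[of "\<sigma> (Max A)" p y m] p that flip
      by (auto simp: q_def sign_interpolant_def)
    moreover have "\<forall>x\<in>A. has_sign (\<sigma> x) (poly q x)"
      using left p fin m by (meson Max_ge le_less_trans sign_interpolant_def)
    moreover have "\<forall>y\<le>Min A. has_sign (\<sigma> (Min A)) (poly q y)"
      using left p Max_A m by (auto simp: sign_interpolant_def)
    ultimately show ?thesis using p card_ins flip b m
      by (intro exI[of _ q]) (auto simp: sign_interpolant_def Min_ins Max_ins)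
  qed
qed

lemma sign_interpolation:
  assumes "finite A" and "A \<noteq> {}"
  shows "\<exists>p. sign_interpolant A \<sigma> p"
  using assms
proof (induction A rule: finite_linorder_max_induct)
  case empty thus ?case by simp
next
  case (insert b A)
  show ?case
  proof (cases "A = {}")
    case True
    show ?thesis
      by (rule exI[of _ "[:if \<sigma> b then 1 else -1:]"]) (simp add: True sign_interpolant_def has_sign_def)
  next
    case False
    thus ?thesis using insert sign_interpolant_insert_max by (meson Max_in)
  qed
qed

text \<open>Guarding a finite set \<open>B\<close> by the innermost points of point sets \<open>L\<close> to its left and \<open>R\<close>
  to its right: these become the extreme points of the enlarged set.\<close>

definition guarded :: "real set \<Rightarrow> real set \<Rightarrow> real set \<Rightarrow> real set" where
  "guarded L B R = B \<union> (if L = {} then {} else {Max L}) \<union> (if R = {} then {} else {Min R})"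

lemma guarded_props:
  fixes B L R :: "real set"
  assumes fin: "finite B" "finite L" "finite R" and ne: "B \<noteq> {}"
    and below: "\<forall>l\<in>L. \<forall>x\<in>B. l < x" and above: "\<forall>r\<in>R. \<forall>x\<in>B. x < r"
  shows "finite (guarded L B R)" "guarded L B R \<noteq> {}"
    and "L \<noteq> {} \<Longrightarrow> Min (guarded L B R) = Max L \<and> Max L \<notin> B"
    and "R \<noteq> {} \<Longrightarrow> Max (guarded L B R) = Min R \<and> Min R \<notin> B"
    and "card (guarded L B R) = card B + of_bool (L \<noteq> {}) + of_bool (R \<noteq> {})"
proof -
  let ?A = "guarded L B R"
  have Max_L: "Max L \<in> L" "\<forall>x\<in>B. Max L < x" if "L \<noteq> {}" using that fin below by auto
  have Min_R: "Min R \<in> R" "\<forall>x\<in>B. x < Min R" if "R \<noteq> {}" using that fin above by auto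
  have L_notin: "Max L \<notin> B" if "L \<noteq> {}" using Max_L that by blast
  have R_notin: "Min R \<notin> B" if "R \<noteq> {}" using Min_R that by blast
  have L_lt_R: "Max L < Min R" if "L \<noteq> {}" "R \<noteq> {}"
    using that ne Max_L Min_R by (meson all_not_in_conv less_trans)
  have cases: "x \<in> B \<or> (L \<noteq> {} \<and> x = Max L) \<or> (R \<noteq> {} \<and> x = Min R)" if "x \<in> ?A" for x
    using that by (auto simp: guarded_def split: if_splits)
  show fin_A: "finite ?A" and "?A \<noteq> {}" using fin ne by (auto simp: guarded_def)
  show "Min ?A = Max L \<and> Max L \<notin> B" if "L \<noteq> {}"
  proof (intro conjI Min_eqI[OF fin_A])
    show "Max L \<in> ?A" using that by (simp add: guarded_def)
    show "Max L \<le> x" if "x \<in> ?A" for x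
      using cases[OF that] \<open>L \<noteq> {}\<close> Max_L L_lt_R by (auto intro: less_imp_le)
  qed (rule L_notin[OF that])
  show "Max ?A = Min R \<and> Min R \<notin> B" if "R \<noteq> {}"
  proof (intro conjI Max_eqI[OF fin_A])
    show "Min R \<in> ?A" using that by (simp add: guarded_def)
    show "x \<le> Min R" if "x \<in> ?A" for x
      using cases[OF that] \<open>R \<noteq> {}\<close> Min_R L_lt_R by (auto intro: less_imp_le)
  qed (rule R_notin[OF that])
  have "Min R \<notin> insert (Max L) B" if "R \<noteq> {}" "L \<noteq> {}"
    using R_notin L_lt_R that by force
  with L_notin R_notin show "card ?A = card B + of_bool (L \<noteq> {}) + of_bool (R \<noteq> {})"
    using fin by (cases "L = {}"; cases "R = {}") (simp_all add: guarded_def)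
qed

text \<open>Sign pattern on \<open>B\<close>, positive on point sets \<open>L\<close> to the left and \<open>R\<close> to the right of \<open>B\<close>:
  interpolate on the guarded set with positive signs at the guards. Degree \<open>|B|\<close> suffices
  unless \<open>B\<close> is odd and guarded on both sides, where parity costs one more.\<close>

lemma sign_poly_between:
  fixes B L R :: "real set" and \<sigma> :: "real \<Rightarrow> bool"
  assumes fin: "finite B" "finite L" "finite R"
    and below: "\<forall>l\<in>L. \<forall>x\<in>B. l < x" and above: "\<forall>r\<in>R. \<forall>x\<in>B. x < r"
  shows "\<exists>q. (\<forall>x\<in>B. has_sign (\<sigma> x) (poly q x)) \<and> (\<forall>y\<in>L \<union> R. 0 < poly q y)
           \<and> degree q \<le> card B + of_bool (odd (card B) \<and> L \<noteq> {} \<and> R \<noteq> {})"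
proof (cases "B = {}")
  case True
  thus ?thesis by (intro exI[of _ 1]) simp
next
  case B_ne: False
  let ?A = "guarded L B R"
  note A = guarded_props[OF fin B_ne below above]
  define \<sigma>' where "\<sigma>' x = (x \<in> B \<longrightarrow> \<sigma> x)" for x
  obtain p where deg_p: "degree p \<le> card ?A - 1"
    and par: "even (degree p) \<longleftrightarrow> \<sigma>' (Min ?A) = \<sigma>' (Max ?A)"
    and on_A: "\<forall>x\<in>?A. has_sign (\<sigma>' x) (poly p x)"
    and tail_L: "\<forall>y\<le>Min ?A. has_sign (\<sigma>' (Min ?A)) (poly p y)"
    and tail_R: "\<forall>y\<ge>Max ?A. has_sign (\<sigma>' (Max ?A)) (poly p y)"
    using sign_interpolation[OF A(1,2)] unfolding sign_interpolant_def by blast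
  have "0 < poly p y" if "y \<in> L" for y
    using that fin tail_L A(3) by (force simp: \<sigma>'_def)
  moreover have "0 < poly p y" if "y \<in> R" for y
    using that fin tail_R A(4) by (force simp: \<sigma>'_def)
  moreover have "has_sign (\<sigma> x) (poly p x)" if "x \<in> B" for x
    using on_A[rule_format, of x] that by (simp add: guarded_def \<sigma>'_def)
  moreover have "degree p \<le> card B + of_bool (odd (card B) \<and> L \<noteq> {} \<and> R \<noteq> {})"
  proof (cases "L \<noteq> {} \<and> R \<noteq> {}")
    case True
    hence "even (degree p)" using par A(3,4) by (simp add: \<sigma>'_def)
    hence "degree p \<noteq> card B + 1 \<or> odd (card B)" by auto
    thus ?thesis using deg_p A(5) True by auto
  next
    case False
    have "card B \<ge> 1" using fin B_ne by (simp add: Suc_leI card_gt_0_iff)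
    thus ?thesis using deg_p A(5) False by (cases "L = {}"; cases "R = {}") auto
  qed
  ultimately show ?thesis by blast
qed

definition sign_pattern_poly :: "real set \<Rightarrow> real set \<Rightarrow> (real \<Rightarrow> bool) \<Rightarrow> real poly \<Rightarrow> bool" where
  "sign_pattern_poly W B \<sigma> q \<longleftrightarrow> (\<forall>w\<in>W. has_sign (if w \<in> B then \<sigma> w else True) (poly q w))"

lemma sign_pattern_poly_mult:
  assumes "A1 \<inter> A2 = {}" "sign_pattern_poly W A1 \<sigma> q1" "sign_pattern_poly W A2 \<sigma> q2"
  shows "sign_pattern_poly W (A1 \<union> A2) \<sigma> (q1 * q2)"
  unfolding sign_pattern_poly_def
proof
  fix w assume "w \<in> W"
  hence "has_sign ((if w \<in> A1 then \<sigma> w else True) = (if w \<in> A2 then \<sigma> w else True)) (poly (q1 * q2) w)"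
    using assms(2,3) by (simp add: sign_pattern_poly_def has_sign_mult)
  thus "has_sign (if w \<in> A1 \<union> A2 then \<sigma> w else True) (poly (q1 * q2) w)"
    using assms(1) by (auto split: if_splits)
qed

lemma sign_pattern_poly_prod:
  assumes "finite I" and "\<forall>i\<in>I. \<forall>j\<in>I. i \<noteq> j \<longrightarrow> B i \<inter> B j = {}"
    and "\<forall>i\<in>I. sign_pattern_poly W (B i) \<sigma> (q i)"
  shows "sign_pattern_poly W (\<Union>i\<in>I. B i) \<sigma> (\<Prod>i\<in>I. q i)"
  using assms
proof (induction I rule: finite_induct)
  case empty thus ?case by (simp add: sign_pattern_poly_def)
next
  case (insert i I)
  have "B i \<inter> (\<Union>j\<in>I. B j) = {}" using insert.prems(1) insert.hyps(2) by fastforce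
  thus ?case using insert sign_pattern_poly_mult by simp
qed

lemma contiguous_in_interval:
  assumes c: "contiguous_in W B" and fin_W: "finite W" and ne: "B \<noteq> {}"
    and w: "w \<in> W" "Min B \<le> w" "w \<le> Max B"
  shows "w \<in> B"
proof -
  have BW: "B \<subseteq> W" using c by (simp add: contiguous_in_def)
  have fin_B: "finite B" using finite_subset[OF BW fin_W] .
  define C where "C = {v \<in> W. Min B \<le> v \<and> v < Max B}"
  text \<open>The index gap between \<open>Max B\<close> and \<open>Min B\<close> counts exactly the points of \<open>C\<close>.\<close>
  have C_diff: "C = {v \<in> W. v < Max B} - {v \<in> W. v < Min B}" by (auto simp: C_def)
  have "Min B \<le> Max B" using fin_B ne by (meson Max_ge Min_in)
  hence "{v \<in> W. v < Min B} \<subseteq> {v \<in> W. v < Max B}" by auto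
  hence "card C = card {v \<in> W. v < Max B} - card {v \<in> W. v < Min B}"
    unfolding C_diff by (rule card_Diff_subset[rotated]) (simp add: fin_W)
  also have "\<dots> = idx_in W (Max B) - idx_in W (Min B)" by (simp add: idx_in_def)
  also have "\<dots> = card (B - {Max B})" using c ne fin_B by (simp add: contiguous_in_def)
  finally have card_C: "card (B - {Max B}) = card C" ..
  have "B - {Max B} \<subseteq> C"
  proof
    fix x assume x: "x \<in> B - {Max B}"
    hence "x \<le> Max B" "Min B \<le> x" "x \<in> W" using fin_B BW by auto
    thus "x \<in> C" using x by (simp add: C_def)
  qed
  moreover have "finite C" using fin_W by (simp add: C_def)
  ultimately have B_C: "B - {Max B} = C" using card_C by (intro card_subset_eq) simp_all
  show ?thesis
  proof (cases "w = Max B")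
    case True
    thus ?thesis using Max_in[OF fin_B ne] by simp
  next
    case False
    hence "w < Max B" using w(3) by linarith
    hence "w \<in> C" using w(1,2) by (simp add: C_def)
    thus ?thesis using B_C by blast
  qed
qed

lemma contiguous_block_poly:
  assumes fin_W: "finite W" and c: "contiguous_in W B"
  shows "\<exists>q. sign_pattern_poly W B \<sigma> q
           \<and> degree q \<le> card B + of_bool (odd (card B) \<and> Min W \<notin> B \<and> Max W \<notin> B)"
proof (cases "B = {}")
  case True
  thus ?thesis by (intro exI[of _ 1]) (simp add: sign_pattern_poly_def)
next
  case ne: False
  have BW: "B \<subseteq> W" using c by (simp add: contiguous_in_def)
  have fin_B: "finite B" using finite_subset[OF BW fin_W] .
  define L where "L = {w \<in> W. w < Min B}"
  define R where "R = {w \<in> W. Max B < w}"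
  have below: "\<forall>l\<in>L. \<forall>x\<in>B. l < x" and above: "\<forall>r\<in>R. \<forall>x\<in>B. x < r"
    using fin_B by (auto simp: L_def R_def intro: less_le_trans[OF _ Min_le] le_less_trans[OF Max_ge])
  obtain q where sign_B: "\<forall>x\<in>B. has_sign (\<sigma> x) (poly q x)" and pos: "\<forall>y\<in>L \<union> R. 0 < poly q y"
    and deg: "degree q \<le> card B + of_bool (odd (card B) \<and> L \<noteq> {} \<and> R \<noteq> {})"
    using sign_poly_between[OF fin_B _ _ below above, of \<sigma>] fin_W by (auto simp: L_def R_def)
  text \<open>By contiguity every point of \<open>W\<close> outside \<open>B\<close> lies to the left or right of \<open>B\<close>.\<close>
  have "W - B \<subseteq> L \<union> R"
    using contiguous_in_interval[OF c fin_W ne] by (force simp: L_def R_def)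
  hence "sign_pattern_poly W B \<sigma> q"
    using sign_B pos by (auto simp: sign_pattern_poly_def)
  moreover have "Min W \<notin> B" if "L \<noteq> {}"
    using that fin_W fin_B by (auto simp: L_def) (meson Min_le not_le order.strict_trans2)
  moreover have "Max W \<notin> B" if "R \<noteq> {}"
    using that fin_W fin_B by (auto simp: R_def) (meson Max_ge not_le order.strict_trans1)
  ultimately have "degree q \<le> card B + of_bool (odd (card B) \<and> Min W \<notin> B \<and> Max W \<notin> B)"
    using deg by (cases "odd (card B) \<and> L \<noteq> {} \<and> R \<noteq> {}") simp_all
  with \<open>sign_pattern_poly W B \<sigma> q\<close> show ?thesis by blast
qed

lemma decomposition_sign_poly:
  fixes W YS YE :: "real set" and Xs :: "real set list"
  defines "P \<equiv> YS # Xs @ [YE]"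
  assumes fin_W: "finite W"
    and disj: "\<forall>a<length P. \<forall>b<length P. a \<noteq> b \<longrightarrow> P ! a \<inter> P ! b = {}"
    and contig: "\<forall>S\<in>set P. contiguous_in W S"
    and start: "YS = {} \<or> Min W \<in> YS" and "end": "YE = {} \<or> Max W \<in> YE"
  shows "\<exists>q. sign_pattern_poly W (\<Union>(set P)) \<sigma> q
           \<and> degree q \<le> card (\<Union>(set P)) + card {i. i < length Xs \<and> odd (card (Xs ! i))}"
proof -
  define I where "I = {..<length P}"
  define extra :: "real set \<Rightarrow> nat" where
    "extra S = of_bool (odd (card S) \<and> Min W \<notin> S \<and> Max W \<notin> S)" for S
  have "\<forall>i\<in>I. \<exists>q. sign_pattern_poly W (P ! i) \<sigma> q \<and> degree q \<le> card (P ! i) + extra (P ! i)"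
    using contiguous_block_poly[OF fin_W] contig by (simp add: I_def extra_def)
  then obtain q where q: "\<And>i. i \<in> I \<Longrightarrow> sign_pattern_poly W (P ! i) \<sigma> (q i)"
      and deg_q: "\<And>i. i \<in> I \<Longrightarrow> degree (q i) \<le> card (P ! i) + extra (P ! i)"
    by metis
  have union: "(\<Union>i\<in>I. P ! i) = \<Union>(set P)" by (auto simp: I_def set_conv_nth)
  have fin_blocks: "\<forall>i\<in>I. finite (P ! i)"
    using contig fin_W by (metis I_def contiguous_in_def finite_subset lessThan_iff nth_mem)
  have "sign_pattern_poly W (\<Union>(set P)) \<sigma> (\<Prod>i\<in>I. q i)"
    using sign_pattern_poly_prod[of I "\<lambda>i. P ! i"] q disj union by (auto simp: I_def)
  moreover have "degree (\<Prod>i\<in>I. q i) \<le> (\<Sum>i\<in>I. card (P ! i)) + (\<Sum>i\<in>I. extra (P ! i))"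
  proof -
    have "degree (\<Prod>i\<in>I. q i) \<le> (\<Sum>i\<in>I. degree (q i))"
      using degree_prod_sum_le[of I q] by (simp add: I_def o_def)
    also have "\<dots> \<le> (\<Sum>i\<in>I. card (P ! i) + extra (P ! i))" by (rule sum_mono) (rule deg_q)
    finally show ?thesis by (simp add: sum.distrib)
  qed
  moreover have "(\<Sum>i\<in>I. card (P ! i)) = card (\<Union>(set P))"
    using card_UN_disjoint[of I "\<lambda>i. P ! i"] fin_blocks disj union by (simp add: I_def)
  moreover have "(\<Sum>i\<in>I. extra (P ! i)) \<le> card {i. i < length Xs \<and> odd (card (Xs ! i))}"
  proof -
    text \<open>The end blocks contain an end point of \<open>W\<close>, so only the middle blocks count.\<close>
    have "extra YS = 0" "extra YE = 0" using start "end" by (auto simp: extra_def)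
    have "(\<Sum>i\<in>I. extra (P ! i)) = sum_list (map extra P)"
      by (simp add: I_def sum_list_sum_nth atLeast0LessThan)
    also have "\<dots> = sum_list (map extra Xs)" using \<open>extra YS = 0\<close> \<open>extra YE = 0\<close> by (simp add: P_def)
    also have "\<dots> \<le> sum_list (map (\<lambda>X. of_bool (odd (card X))) Xs)"
      by (rule sum_list_mono) (simp add: extra_def)
    also have "\<dots> = card {i. i < length Xs \<and> odd (card (Xs ! i))}"
      by (simp add: sum_list_sum_nth atLeast0LessThan lessThan_def Collect_conj_eq[symmetric])
    finally show ?thesis .
  qed
  ultimately show ?thesis by (intro exI[of _ "\<Prod>i\<in>I. q i"]) linarith
qed

lemma sum_poly_vanishes:
  assumes "\<forall>j\<le>d. (\<Sum>w\<in>W. f w * w ^ j) = (0::real)" and "degree p \<le> d"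
  shows "(\<Sum>w\<in>W. f w * poly p w) = 0"
proof -
  have "(\<Sum>w\<in>W. f w * poly p w) = (\<Sum>w\<in>W. \<Sum>i\<le>degree p. coeff p i * (f w * w ^ i))"
    by (simp add: poly_altdef sum_distrib_left algebra_simps)
  also have "\<dots> = (\<Sum>i\<le>degree p. coeff p i * (\<Sum>w\<in>W. f w * w ^ i))"
    by (subst sum.swap) (simp add: sum_distrib_left)
  also have "\<dots> = 0" using assms by simp
  finally show ?thesis .
qed

text \<open>A weight function with vanishing moments up to order \<open>d\<close>, non-positive off \<open>T\<close>, must
  vanish on \<open>T\<close> as soon as every sign pattern on \<open>T\<close> is realised by a polynomial of degree
  \<open>\<le> d\<close> that is positive off \<open>T\<close>: test against the pattern opposite to the signs of \<open>f\<close>.\<close>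

lemma moment_weights_vanish:
  fixes f :: "real \<Rightarrow> real"
  assumes fin_W: "finite W"
    and moments: "\<forall>j\<le>d. (\<Sum>w\<in>W. f w * w ^ j) = 0"
    and nonpos: "\<forall>w\<in>W - T. f w \<le> 0"
    and sep: "\<And>\<sigma>. \<exists>q. sign_pattern_poly W T \<sigma> q \<and> degree q \<le> d"
  shows "\<forall>w\<in>W \<inter> T. f w = 0"
proof -
  obtain q where q: "sign_pattern_poly W T (\<lambda>w. f w < 0) q" and deg: "degree q \<le> d"
    using sep by blast
  have terms: "f w * poly q w \<le> 0 \<and> (w \<in> T \<and> f w \<noteq> 0 \<longrightarrow> f w * poly q w < 0)" if "w \<in> W" for w
  proof -
    have "has_sign (if w \<in> T then f w < 0 else True) (poly q w)"
      using q that by (simp add: sign_pattern_poly_def)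
    thus ?thesis using nonpos that
      by (cases "w \<in> T"; cases "f w < 0")
         (auto simp: has_sign_def mult_le_0_iff mult_less_0_iff)
  qed
  have "(\<Sum>w\<in>W. - (f w * poly q w)) = 0"
    using sum_poly_vanishes[OF moments deg] by (simp add: sum_negf)
  hence "\<forall>w\<in>W. f w * poly q w = 0"
    using sum_nonneg_eq_0_iff[OF fin_W, of "\<lambda>w. - (f w * poly q w)"] terms by auto
  thus ?thesis using terms by fastforce
qed

lemma coord_pos_surj:
  assumes "j < CARD('n::{finite,wellorder})"
  shows "\<exists>i::'n. coord_pos i = j"
proof -
  have "strict_mono (coord_pos :: 'n \<Rightarrow> nat)"
    unfolding strict_mono_def coord_pos_def by (auto intro: psubset_card_mono)
  hence inj: "inj (coord_pos :: 'n \<Rightarrow> nat)" by (rule strict_mono_imp_inj_on)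
  have "range (coord_pos :: 'n \<Rightarrow> nat) \<subseteq> {..<CARD('n)}"
    unfolding coord_pos_def by (auto intro: psubset_card_mono)
  moreover have "card (range (coord_pos :: 'n \<Rightarrow> nat)) = CARD('n)"
    using inj by (simp add: card_image)
  ultimately have "range (coord_pos :: 'n \<Rightarrow> nat) = {..<CARD('n)}"
    by (intro card_subset_eq) auto
  thus ?thesis using assms by (metis lessThan_iff rangeE)
qed

text \<open>The first coordinate of \<open>\<gamma>(t)\<close> is \<open>t\<close>, so \<open>\<gamma>\<close> is injective.\<close>

lemma moment_curve_inj: "inj (moment_curve :: real \<Rightarrow> real ^ 'n::{finite,wellorder})"
proof (rule injI)
  obtain i :: 'n where i: "coord_pos i = 0" using coord_pos_surj[of 0] by auto
  fix s t assume "(moment_curve s :: (real, 'n) vec) = moment_curve t"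
  hence "(moment_curve s :: (real, 'n) vec) $ i = moment_curve t $ i" by simp
  thus "s = t" by (simp add: moment_curve_def i)
qed

text \<open>An affine dependence among points of the moment curve in \<open>\<real>\<^sup>d\<close> has vanishing moments of
  all orders \<open>0, \<dots>, d\<close>: the coordinates of \<open>\<gamma>(t)\<close> are exactly \<open>t, \<dots>, t\<^sup>d\<close>.\<close>

lemma moment_curve_dependence_moments:
  fixes f :: "real \<Rightarrow> real"
  assumes "(\<Sum>t\<in>W. f t *\<^sub>R (moment_curve t :: real ^ 'n::{finite,wellorder})) = 0"
    and "(\<Sum>t\<in>W. f t) = 0"
  shows "\<forall>j\<le>CARD('n). (\<Sum>t\<in>W. f t * t ^ j) = 0"
proof (intro allI impI)
  fix j assume j: "j \<le> CARD('n)"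
  show "(\<Sum>t\<in>W. f t * t ^ j) = 0"
  proof (cases j)
    case 0
    thus ?thesis using assms(2) by simp
  next
    case (Suc j')
    hence "j' < CARD('n)" using j by simp
    then obtain i :: 'n where i: "coord_pos i = j'" using coord_pos_surj by blast
    have "(\<Sum>t\<in>W. f t *\<^sub>R (moment_curve t :: (real, 'n) vec)) $ i = 0" using assms(1) by simp
    thus ?thesis by (simp add: moment_curve_def i Suc)
  qed
qed

lemma convex_hull_inj_image_coeffs:
  fixes g :: "'a \<Rightarrow> 'b::real_vector"
  assumes "finite T" "inj_on g T" "x \<in> convex hull (g ` T)"
  shows "\<exists>a. (\<forall>t\<in>T. 0 \<le> a t) \<and> sum a T = 1 \<and> (\<Sum>t\<in>T. a t *\<^sub>R g t) = x"
proof -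
  obtain u where u: "\<forall>y\<in>g ` T. 0 \<le> u y" "sum u (g ` T) = 1" "(\<Sum>y\<in>g ` T. u y *\<^sub>R y) = x"
    using assms(1,3) by (auto simp: convex_hull_finite)
  thus ?thesis using sum.reindex[OF assms(2), of u] sum.reindex[OF assms(2), of "\<lambda>y. u y *\<^sub>R y"]
    by (intro exI[of _ "u \<circ> g"]) auto
qed

lemma convex_combination_restrict:
  fixes g :: "'a \<Rightarrow> 'b::real_vector"
  assumes fin: "finite T" and S: "S \<subseteq> T" and a: "\<forall>t\<in>T. 0 \<le> a t" "sum a T = 1"
    and zero: "\<forall>t\<in>T - S. a t = 0"
  shows "(\<Sum>t\<in>T. a t *\<^sub>R g t) \<in> convex hull (g ` S)"
proof -
  have "sum a S = 1" using a(2) sum.mono_neutral_right[OF fin S zero] by simp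
  hence "(\<Sum>t\<in>S. a t *\<^sub>R g t) \<in> convex hull (g ` S)"
    using finite_subset[OF S fin] S a(1) by (intro convex_sum convex_convex_hull) (auto intro: hull_inc)
  moreover have "(\<Sum>t\<in>T. a t *\<^sub>R g t) = (\<Sum>t\<in>S. a t *\<^sub>R g t)"
    using zero by (intro sum.mono_neutral_right[OF fin S]) simp
  ultimately show ?thesis by simp
qed

lemma moment_curve_hull_inter:
  fixes T1 T2 :: "real set"
  assumes fin: "finite T1" "finite T2"
    and sep: "\<And>\<sigma>. \<exists>q. sign_pattern_poly (T1 \<union> T2) T1 \<sigma> q \<and> degree q \<le> CARD('n::{finite,wellorder})"
  shows "convex hull ((moment_curve :: real \<Rightarrow> real ^ 'n::{finite,wellorder}) ` T1)
           \<inter> convex hull (moment_curve ` T2)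
           \<subseteq> convex hull (moment_curve ` T1 \<inter> moment_curve ` T2)"
proof
  let ?g = "moment_curve :: real \<Rightarrow> (real, 'n) vec" and ?W = "T1 \<union> T2"
  have fin_W: "finite ?W" using fin by simp
  have inj: "inj_on ?g T" for T using moment_curve_inj by (rule inj_on_subset) simp
  fix x assume x: "x \<in> convex hull (?g ` T1) \<inter> convex hull (?g ` T2)"
  obtain a where a: "\<forall>t\<in>T1. 0 \<le> a t" "sum a T1 = 1" "(\<Sum>t\<in>T1. a t *\<^sub>R ?g t) = x"
    using convex_hull_inj_image_coeffs[OF fin(1) inj] x by blast
  obtain b where b: "\<forall>t\<in>T2. 0 \<le> b t" "sum b T2 = 1" "(\<Sum>t\<in>T2. b t *\<^sub>R ?g t) = x"
    using convex_hull_inj_image_coeffs[OF fin(2) inj] x by blast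
  text \<open>The difference of the two coefficient vectors is an affine dependence on \<open>\<gamma>(W)\<close>.\<close>
  define f where "f t = (if t \<in> T1 then a t else 0) - (if t \<in> T2 then b t else 0)" for t
  have restrict: "(\<Sum>t\<in>?W. (if t \<in> S then h t else 0) *\<^sub>R v t) = (\<Sum>t\<in>S. h t *\<^sub>R v t)"
    if "S \<subseteq> ?W" for S and h :: "real \<Rightarrow> real" and v :: "real \<Rightarrow> 'v::real_vector"
    by (rule sum.mono_neutral_cong_right) (use that fin_W in auto)
  have split: "(\<Sum>t\<in>?W. f t *\<^sub>R v t) = (\<Sum>t\<in>T1. a t *\<^sub>R v t) - (\<Sum>t\<in>T2. b t *\<^sub>R v t)"
    for v :: "real \<Rightarrow> 'v::real_vector"
    using restrict[of T1 a v] restrict[of T2 b v]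
    by (simp add: f_def scaleR_left_diff_distrib sum_subtractf)
  have "(\<Sum>t\<in>?W. f t *\<^sub>R ?g t) = 0" using split[of ?g] a(3) b(3) by simp
  moreover have "(\<Sum>t\<in>?W. f t) = 0" using split[of "\<lambda>_. 1::real"] a(2) b(2) by simp
  ultimately have "\<forall>j\<le>CARD('n). (\<Sum>t\<in>?W. f t * t ^ j) = 0"
    by (rule moment_curve_dependence_moments)
  moreover have "\<forall>w\<in>?W - T1. f w \<le> 0" using b(1) by (simp add: f_def)
  ultimately have f0: "\<forall>w\<in>?W \<inter> T1. f w = 0" using moment_weights_vanish[OF fin_W _ _ sep] by blast
  have "\<forall>t\<in>T1 - T1 \<inter> T2. a t = 0" using f0 by (auto simp: f_def)
  from convex_combination_restrict[where g = ?g, OF fin(1) Int_lower1 a(1,2) this]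
  have "x \<in> convex hull (?g ` (T1 \<inter> T2))" using a(3) by simp
  thus "x \<in> convex hull (?g ` T1 \<inter> ?g ` T2)" by (simp add: image_Int[OF moment_curve_inj])
qed

text \<open>The theorem: the decomposed set provides the sign polynomials of degree
  \<open>\<le> k + (d - k) = d\<close> required by the geometric reduction, applied with the roles of
  \<open>T\<^sub>1, T\<^sub>2\<close> swapped if necessary.\<close>

theorem mainTheorem6:
  fixes T1 T2 :: "real set" and k :: nat
  assumes "1 \<le> k" and "k \<le> CARD('n::{finite,wellorder})"
    and "finite T1" and "card T1 = k" and "finite T2" and "card T2 = k"
    and "\<exists>T \<in> {T1, T2}. \<exists>YS (Xs :: real set list) YE.
           (let W = T1 \<union> T2; P = YS # Xs @ [YE] in
              T = \<Union> (set P)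
            \<and> (\<forall>a < length P. \<forall>b < length P. a \<noteq> b \<longrightarrow> P ! a \<inter> P ! b = {})
            \<and> (\<forall>S \<in> set P. contiguous_in W S)
            \<and> (YS = {} \<or> Min W \<in> YS)
            \<and> (YE = {} \<or> Max W \<in> YE)
            \<and> card {i. i < length Xs \<and> odd (card (Xs ! i))} \<le> CARD('n::{finite,wellorder}) - k)"
  shows "convex hull ((moment_curve :: real \<Rightarrow> real ^ 'n::{finite,wellorder}) ` T1)
           \<inter> convex hull ((moment_curve :: real \<Rightarrow> real ^ 'n::{finite,wellorder}) ` T2)
         = convex hull ((moment_curve :: real \<Rightarrow> real ^ 'n::{finite,wellorder}) ` T1
                         \<inter> (moment_curve :: real \<Rightarrow> real ^ 'n::{finite,wellorder}) ` T2)"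
proof (rule equalityI)
  let ?W = "T1 \<union> T2"
  from assms(7) obtain T YS Xs YE where T: "T \<in> {T1, T2}" and T_eq: "T = \<Union>(set (YS # Xs @ [YE]))"
    and disj: "\<forall>a<length (YS # Xs @ [YE]). \<forall>b<length (YS # Xs @ [YE]).
                 a \<noteq> b \<longrightarrow> (YS # Xs @ [YE]) ! a \<inter> (YS # Xs @ [YE]) ! b = {}"
    and contig: "\<forall>S\<in>set (YS # Xs @ [YE]). contiguous_in ?W S"
    and ends: "YS = {} \<or> Min ?W \<in> YS" "YE = {} \<or> Max ?W \<in> YE"
    and odd_blocks: "card {i. i < length Xs \<and> odd (card (Xs ! i))} \<le> CARD('n) - k"
    unfolding Let_def by blast
  have sep: "\<exists>q. sign_pattern_poly ?W T \<sigma> q \<and> degree q \<le> CARD('n)" for \<sigma>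
  proof -
    have "card T = k" using T assms(4,6) by auto
    thus ?thesis
      using decomposition_sign_poly[OF _ disj contig ends, of \<sigma>] assms(2,3,5) odd_blocks
      unfolding T_eq[symmetric] by fastforce
  qed
  show "convex hull (moment_curve ` T1) \<inter> convex hull (moment_curve ` T2)
    \<subseteq> convex hull ((moment_curve :: real \<Rightarrow> (real, 'n) vec) ` T1 \<inter> moment_curve ` T2)"
  proof (cases "T = T1")
    case True
    thus ?thesis using moment_curve_hull_inter[OF assms(3,5)] sep by blast
  next
    case False
    hence "\<exists>q. sign_pattern_poly (T2 \<union> T1) T2 \<sigma> q \<and> degree q \<le> CARD('n)" for \<sigma>
      using T sep by (simp add: Un_commute)
    from moment_curve_hull_inter[OF assms(5,3) this] show ?thesis by (metis Int_commute)
  qed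
qed (simp add: hull_mono)

end
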